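(* For all $x>0$ and $p\le 1$, $$H(x,x^p)^3\le x^{p+1}A(x,x^p)\le L(x,x^p)^3.$$
   Context: For $a,b>0$: $H(a,b)=\frac{2ab}{a+b}$, $A(a,b)=\frac{a+b}{2}$, and $L(a,b)=\frac{a-b}{\log a-\log b}$ for $a\ne b$, $L(a,a)=a$. *)

theory Defs
  imports Complex_Main
begin

definition Hmean :: "real \<Rightarrow> real \<Rightarrow> real" where
  "Hmean a b = 2 * a * b / (a + b)"

definition Amean :: "real \<Rightarrow> real \<Rightarrow> real" where
  "Amean a b = (a + b) / 2"

definition Lmean :: "real \<Rightarrow> real \<Rightarrow> real" where
  "Lmean a b = (if a = b then a else (a - b) / (ln a - ln b))"

end

theory Submission
  imports Defs
begin

text \<open>Write a = g exp s and b = g exp (-s) with g = sqrt (a b). Then a b A(a,b) = g^3 cosh s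
  and L(a,b) = g sinh s / s, so the right inequality becomes s^3 cosh s \<le> (sinh s)^3, i.e.
  s \<le> sinh s (cosh s)^(-1/3) for s \<ge> 0. The difference vanishes at 0 and its derivative is
  (w^2 - 1)^2 (2 w^2 + 1) / (3 w^4) with w = (cosh s)^(1/3). The left inequality is the product
  of H^2 \<le> G^2 = a b and H \<le> A. Both inequalities hold for all positive a, b.\<close>

lemma deriv_sinh_mult_cosh_powr_ge_1:
  fixes s :: real
  shows "1 \<le> cosh s powr (2/3) - (sinh s)\<^sup>2 * cosh s powr (-4/3) / 3"
proof -
  define w where "w = cosh s powr (1/3)"
  have "cosh s \<ge> 1" by (rule cosh_real_ge_1)
  then have w_ge_1: "w \<ge> 1" and cosh_eq: "cosh s = w ^ 3"
    by (simp_all add: w_def ge_one_powr_ge_zero flip: powr_realpow add: powr_powr)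
  have "cosh s powr (2/3) = w ^ 2" "cosh s powr (-4/3) = 1 / w ^ 4"
    using \<open>cosh s \<ge> 1\<close> by (simp_all add: w_def powr_minus_divide flip: powr_realpow add: powr_powr)
  moreover have "(sinh s)\<^sup>2 = w ^ 6 - 1"
    using cosh_square_eq[of s] by (simp add: cosh_eq flip: power_mult)
  ultimately have "cosh s powr (2/3) - (sinh s)\<^sup>2 * cosh s powr (-4/3) / 3 - 1
      = (w\<^sup>2 - 1)\<^sup>2 * (2 * w\<^sup>2 + 1) / (3 * w ^ 4)"
    using w_ge_1 by (simp add: field_simps) algebra
  also have "\<dots> \<ge> 0" by simp
  finally show ?thesis by simp
qed

lemma le_sinh_mult_cosh_powr:
  fixes s :: real
  assumes "s \<ge> 0"
  shows "s \<le> sinh s * cosh s powr (-1/3)"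
proof -
  let ?f = "\<lambda>s::real. sinh s * cosh s powr (-1/3) - s"
  have "?f 0 \<le> ?f s"
  proof (rule DERIV_nonneg_imp_nondecreasing[OF assms])
    fix x :: real
    have "cosh x * cosh x powr (-1/3) = cosh x powr (2/3)"
      using cosh_real_pos[of x] by (simp add: powr_mult_base)
    then have "(?f has_real_derivative
        cosh x powr (2/3) - (sinh x)\<^sup>2 * cosh x powr (-4/3) / 3 - 1) (at x)"
      by (auto intro!: derivative_eq_intros simp: power2_eq_square field_simps)
    then show "\<exists>y. (?f has_real_derivative y) (at x) \<and> y \<ge> 0"
      using deriv_sinh_mult_cosh_powr_ge_1[of x] by force
  qed
  then show ?thesis by simp
qed

lemma cosh_le_sinh_div_cube:
  fixes s :: real
  assumes "s \<noteq> 0"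
  shows "cosh s \<le> (sinh s / s) ^ 3"
proof -
  have "cosh t \<le> (sinh t / t) ^ 3" if "t > 0" for t :: real
  proof -
    have "t ^ 3 \<le> (sinh t * cosh t powr (-1/3)) ^ 3"
      using le_sinh_mult_cosh_powr that by (intro power_mono) auto
    also have "\<dots> = (sinh t) ^ 3 / (cosh t powr (1/3)) ^ 3"
      by (simp add: powr_minus_divide power_divide)
    also have "(cosh t powr (1/3)) ^ 3 = cosh t"
      by (simp add: powr_powr flip: powr_realpow)
    finally show ?thesis
      using that by (simp add: power_divide pos_le_divide_eq mult.commute)
  qed
  from this[of "\<bar>s\<bar>"] assms show ?thesis
    by (cases "s > 0") (simp_all add: abs_if minus_divide_divide)
qed

lemma means_exp_parametrization:
  fixes g s :: real
  assumes "g > 0" "s \<noteq> 0"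
  shows "Amean (g * exp s) (g * exp (-s)) = g * cosh s"
    and "Lmean (g * exp s) (g * exp (-s)) = g * sinh s / s"
proof -
  have "exp s \<noteq> exp (-s)" using assms(2) by simp
  with assms show "Lmean (g * exp s) (g * exp (-s)) = g * sinh s / s"
    by (simp add: Lmean_def ln_mult sinh_def field_simps)
  show "Amean (g * exp s) (g * exp (-s)) = g * cosh s"
    by (simp add: Amean_def cosh_def field_simps)
qed

lemma geometric_exp_parametrization:
  fixes a b :: real
  assumes "a > 0" "b > 0"
  defines "s \<equiv> (ln a - ln b) / 2"
  shows "a = sqrt (a * b) * exp s" and "b = sqrt (a * b) * exp (-s)"
proof -
  have "s = ln (sqrt a) - ln (sqrt b)"
    using assms by (simp add: s_def ln_sqrt diff_divide_distrib)
  then have "exp s = sqrt a / sqrt b" and "exp (-s) = sqrt b / sqrt a"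
    using assms(1,2) by (simp_all add: exp_diff exp_minus)
  with assms(1,2) show "a = sqrt (a * b) * exp s" and "b = sqrt (a * b) * exp (-s)"
    by (simp_all add: real_sqrt_mult)
qed

lemma mult_Amean_le_Lmean_cube:
  fixes a b :: real
  assumes "a > 0" "b > 0"
  shows "a * b * Amean a b \<le> Lmean a b ^ 3"
proof (cases "a = b")
  case True
  then show ?thesis by (simp add: Amean_def Lmean_def power3_eq_cube)
next
  case False
  define g s where "g = sqrt (a * b)" and "s = (ln a - ln b) / 2"
  have "g > 0" using assms by (simp add: g_def)
  have "s \<noteq> 0" using assms False by (simp add: s_def)
  have a: "a = g * exp s" and b: "b = g * exp (-s)"
    using geometric_exp_parametrization[OF assms] by (simp_all add: g_def s_def)
  have "a * b * Amean a b = g ^ 3 * cosh s"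
    unfolding a b means_exp_parametrization[OF \<open>g > 0\<close> \<open>s \<noteq> 0\<close>]
    by (simp add: power3_eq_cube exp_minus field_simps)
  also have "\<dots> \<le> g ^ 3 * (sinh s / s) ^ 3"
    using cosh_le_sinh_div_cube[OF \<open>s \<noteq> 0\<close>] \<open>g > 0\<close> by simp
  also have "\<dots> = Lmean a b ^ 3"
    unfolding a b means_exp_parametrization[OF \<open>g > 0\<close> \<open>s \<noteq> 0\<close>]
    by (metis power_mult_distrib times_divide_eq_right)
  finally show ?thesis .
qed

lemma Hmean_cube_le_mult_Amean:
  fixes a b :: real
  assumes "a > 0" "b > 0"
  shows "Hmean a b ^ 3 \<le> a * b * Amean a b"
proof -
  have am_gm: "4 * a * b \<le> (a + b)\<^sup>2"
    using zero_le_power2[of "a - b"] by (simp add: power2_eq_square algebra_simps)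
  have H_le_A: "Hmean a b \<le> Amean a b"
    using am_gm assms by (simp add: Hmean_def Amean_def field_simps power2_eq_square)
  have "(Hmean a b)\<^sup>2 = a * b * (4 * a * b / (a + b)\<^sup>2)"
    by (simp add: Hmean_def power_divide power_mult_distrib power2_eq_square)
  also have "\<dots> \<le> a * b * 1"
    using am_gm assms by (intro mult_left_mono) simp_all
  finally have H_le_G: "(Hmean a b)\<^sup>2 \<le> a * b" by simp
  have "(Hmean a b)\<^sup>2 * Hmean a b \<le> a * b * Amean a b"
    using H_le_A H_le_G assms by (intro mult_mono) (simp_all add: Hmean_def)
  then show ?thesis by (simp add: power2_eq_square power3_eq_cube)
qed

theorem mainTheorem8:
  fixes x p :: real
  assumes "x > 0" and "p \<le> 1"
  shows "Hmean x (x powr p) ^ 3 \<le> x powr (p + 1) * Amean x (x powr p)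
       \<and> x powr (p + 1) * Amean x (x powr p) \<le> Lmean x (x powr p) ^ 3"
proof -
  have "x powr (p + 1) = x * x powr p" using assms(1) by (simp add: powr_add)
  moreover have "x powr p > 0" using assms(1) by simp
  ultimately show ?thesis
    using Hmean_cube_le_mult_Amean mult_Amean_le_Lmean_cube assms(1) by simp
qed

end
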